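(* Let $\mathcal{H}_1,\mathcal{H}_2$ be Hilbert spaces of finite dimensions $d_1,d_2$, let $\Lambda,\Xi\in\mathcal{O}(\mathcal{H}_1\to\mathcal{H}_2)$ be quantum channels and let $s>0$. Then $J_\Xi=\frac{J_\Lambda+s'J_\Theta}{1+s'}$ for some real $0<s'\le s$ and some channel $\Theta\in\mathcal{O}(\mathcal{H}_1\to\mathcal{H}_2)$ if and only if $S_m\!\left(\frac{1+s}{s}J_\Xi-\frac1sJ_\Lambda\right)\ge0$ for all $m=1,2,\dots,d_1d_2$.
   Context: $\mathcal{O}(\mathcal{H}_1\to\mathcal{H}_2)$ is the set of quantum channels from operators on $\mathcal{H}_1$ to operators on $\mathcal{H}_2$. The Choi operator of a linear map $\Lambda$ is $J_\Lambda=\sum_{i,j=1}^{d_1}|i\rangle\langle j|\otimes\Lambda(|i\rangle\langle j|)$. For a Hermitian operator $X$, define recursively $S_0(X)=1$ and $S_m(X)=\frac1m\sum_{l=1}^m(-1)^{l-1}\operatorname{tr}[X^l]\,S_{m-l}(X)$ for $m\ge1$. *)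

theory Defs
  imports Complex_Main "Jordan_Normal_Form.Matrix"
begin

(* Matrices are complex matrices (Jordan_Normal_Form 'complex mat'); operators on a
   d-dimensional Hilbert space are elements of carrier_mat d d (standard basis). *)

definition mtrace :: "complex mat \<Rightarrow> complex" where
  "mtrace A = (\<Sum>i<dim_row A. A $$ (i, i))"

definition psd :: "nat \<Rightarrow> complex mat \<Rightarrow> bool" where
  "psd n A \<longleftrightarrow> A \<in> carrier_mat n n \<and>
     (\<forall>v :: nat \<Rightarrow> complex.
        Im (\<Sum>i<n. \<Sum>j<n. cnj (v i) * A $$ (i, j) * v j) = 0 \<and>
        Re (\<Sum>i<n. \<Sum>j<n. cnj (v i) * A $$ (i, j) * v j) \<ge> 0)"

definition unit_mat :: "nat \<Rightarrow> nat \<Rightarrow> nat \<Rightarrow> complex mat" where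
  "unit_mat d i j = mat d d (\<lambda>(a, b). if a = i \<and> b = j then 1 else 0)"

(* (id_k \<otimes> \<Lambda>)(X), where X acts on C^k \<otimes> H_1 (block matrix of k x k blocks of size d1) *)
definition ampl :: "nat \<Rightarrow> nat \<Rightarrow> nat \<Rightarrow> (complex mat \<Rightarrow> complex mat) \<Rightarrow> complex mat \<Rightarrow> complex mat" where
  "ampl k d1 d2 \<Lambda> X = mat (k * d2) (k * d2) (\<lambda>(r, c).
      \<Lambda> (mat d1 d1 (\<lambda>(a, b). X $$ ((r div d2) * d1 + a, (c div d2) * d1 + b)))
        $$ (r mod d2, c mod d2))"

definition channel :: "nat \<Rightarrow> nat \<Rightarrow> (complex mat \<Rightarrow> complex mat) \<Rightarrow> bool" where
  "channel d1 d2 \<Lambda> \<longleftrightarrow>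
     (\<forall>A \<in> carrier_mat d1 d1. \<Lambda> A \<in> carrier_mat d2 d2) \<and>
     (\<forall>A \<in> carrier_mat d1 d1. \<forall>B \<in> carrier_mat d1 d1. \<Lambda> (A + B) = \<Lambda> A + \<Lambda> B) \<and>
     (\<forall>c. \<forall>A \<in> carrier_mat d1 d1. \<Lambda> (c \<cdot>\<^sub>m A) = c \<cdot>\<^sub>m \<Lambda> A) \<and>
     (\<forall>A \<in> carrier_mat d1 d1. mtrace (\<Lambda> A) = mtrace A) \<and>
     (\<forall>k X. psd (k * d1) X \<longrightarrow> psd (k * d2) (ampl k d1 d2 \<Lambda> X))"

(* Choi operator J = \<Sum>_{i,j} |i><j| \<otimes> \<Lambda>(|i><j|) *)
definition choi :: "nat \<Rightarrow> nat \<Rightarrow> (complex mat \<Rightarrow> complex mat) \<Rightarrow> complex mat" where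
  "choi d1 d2 \<Lambda> = mat (d1 * d2) (d1 * d2) (\<lambda>(r, c).
      \<Lambda> (unit_mat d1 (r div d2) (c div d2)) $$ (r mod d2, c mod d2))"

(* S_0(X) = 1, S_m(X) = 1/m \<Sum>_{l=1}^m (-1)^(l-1) tr[X^l] S_{m-l}(X).
   For Hermitian X all traces are real; we take real parts. *)
function S :: "nat \<Rightarrow> complex mat \<Rightarrow> real" where
  "S 0 X = 1"
| "S (Suc m) X = (1 / real (Suc m)) *
     (\<Sum>l\<in>{1..Suc m}. (-1) ^ (l - 1) * Re (mtrace (X ^\<^sub>m l)) * S (Suc m - l) X)"
  by pat_completeness auto
termination by (relation "measure fst") auto

end

(*
  Put X = ((1 + s)/s) J_Xi - (1/s) J_Lambda. A decomposition J_Xi = (J_Lambda + s' J_Theta)/(1 + s')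
  with s' <= s exhibits X as a nonnegative combination of J_Lambda and J_Theta, so X >= 0.
  Conversely, a positive X has partial trace 1 like J_Xi and J_Lambda, so it is the Choi operator
  of a channel Theta, and J_Xi = (J_Lambda + s X)/(1 + s).
  It remains to see that for the Hermitian X, positivity is equivalent to S_m(X) >= 0 for
  m = 1, ..., d1 d2. By Newton's identities S_m(X) is the m-th elementary symmetric function of
  the eigenvalues of X; and reals x_1, ..., x_n are all nonnegative iff all their elementary
  symmetric functions are, because the latter make (t + x_1) ... (t + x_n) positive for all t > 0.
  The spectral theorem needed here is proved by extending an orthonormal family of eigenvectors
  one vector at a time, using an eigenvector of the compression of X to the orthogonal complement
  of the family.
*)

theory Submission
  imports Defs "Jordan_Normal_Form.Schur_Decomposition"
begin

section \<open>Elementary symmetric functions and Newton's identities\<close>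

fun esym :: "real list \<Rightarrow> nat \<Rightarrow> real" where
  "esym [] 0 = 1"
| "esym [] (Suc m) = 0"
| "esym (x # xs) 0 = 1"
| "esym (x # xs) (Suc m) = esym xs (Suc m) + x * esym xs m"

definition power_sum :: "real list \<Rightarrow> nat \<Rightarrow> real" where
  "power_sum xs l = (\<Sum>x\<leftarrow>xs. x ^ l)"

lemma esym_0 [simp]: "esym xs 0 = 1"
  by (cases xs) auto

lemma esym_Cons: "esym (x # xs) m = esym xs m + (if m = 0 then 0 else x * esym xs (m - 1))"
  by (cases m) auto

lemma esym_eq_0_if_length_less: "length xs < m \<Longrightarrow> esym xs m = 0"
  by (induction xs arbitrary: m) (auto elim: less_SucE simp: gr0_conv_Suc esym_Cons)

lemma power_sum_Nil [simp]: "power_sum [] l = 0"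
  by (simp add: power_sum_def)

lemma power_sum_Cons [simp]: "power_sum (x # xs) l = x ^ l + power_sum xs l"
  by (simp add: power_sum_def)

lemma alternating_sum_telescope:
  fixes a :: "nat \<Rightarrow> real"
  shows "(\<Sum>l\<in>{1..Suc m}. (-1) ^ (l - 1) * a l) + (\<Sum>l\<in>{1..m}. (-1) ^ (l - 1) * a (Suc l)) = a 1"
  by (induction m) simp_all

lemma newton_identity:
  "real (Suc m) * esym xs (Suc m) =
     (\<Sum>l\<in>{1..Suc m}. (-1) ^ (l - 1) * power_sum xs l * esym xs (Suc m - l))"
proof (induction xs arbitrary: m)
  case Nil
  then show ?case by simp
next
  case (Cons x xs)
  let ?e = "esym xs" and ?p = "power_sum xs"
  let ?sum = "\<lambda>f. \<Sum>l\<in>{1..Suc m}. (-1) ^ (l - 1) * f l :: real"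
  let ?e' = "\<lambda>l. if Suc m - l = 0 then 0 else x * ?e (Suc m - l - 1)"
  have split: "(\<Sum>l\<in>{1..Suc m}. (-1) ^ (l - 1) * power_sum (x # xs) l * esym (x # xs) (Suc m - l))
     = ?sum (\<lambda>l. ?p l * ?e (Suc m - l)) + ?sum (\<lambda>l. ?p l * ?e' l)
       + ?sum (\<lambda>l. x ^ l * ?e (Suc m - l)) + ?sum (\<lambda>l. x ^ l * ?e' l)"
    by (simp only: power_sum_Cons esym_Cons sum.distrib[symmetric] algebra_simps)
  have "?sum (\<lambda>l. ?p l * ?e' l) = x * (\<Sum>l\<in>{1..m}. (-1) ^ (l - 1) * ?p l * ?e (m - l))"
    by (simp add: sum_distrib_left algebra_simps)
  also have "\<dots> = x * real m * ?e m"
    using Cons.IH by (cases m) simp_all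
  finally have old_sums: "?sum (\<lambda>l. ?p l * ?e' l) = x * real m * ?e m" .
  have "?sum (\<lambda>l. x ^ l * ?e' l) = (\<Sum>l\<in>{1..m}. (-1) ^ (l - 1) * (x ^ Suc l * ?e (Suc m - Suc l)))"
    by (simp add: algebra_simps)
  then have new_sums: "?sum (\<lambda>l. x ^ l * ?e (Suc m - l)) + ?sum (\<lambda>l. x ^ l * ?e' l) = x * ?e m"
    using alternating_sum_telescope[of "\<lambda>l. x ^ l * ?e (Suc m - l)" m] by simp
  show ?case
    unfolding split old_sums using new_sums Cons.IH[of m] by (simp add: algebra_simps)
qed

lemma esym_nonneg: "\<forall>x\<in>set xs. x \<ge> 0 \<Longrightarrow> esym xs m \<ge> 0"
proof (induction xs arbitrary: m)
  case Nil
  then show ?case by (cases m) auto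
next
  case (Cons x xs)
  then show ?case by (cases m) auto
qed

lemma prod_list_add_eq_esym:
  fixes t :: real
  shows "(\<Prod>x\<leftarrow>xs. t + x) = (\<Sum>m\<le>length xs. esym xs m * t ^ (length xs - m))"
proof (induction xs)
  case Nil
  then show ?case by simp
next
  case (Cons x xs)
  let ?L = "length xs"
  have "(\<Prod>y\<leftarrow>x # xs. t + y) = (t + x) * (\<Sum>m\<le>?L. esym xs m * t ^ (?L - m))"
    using Cons by simp
  also have "\<dots> = (\<Sum>m\<le>?L. esym xs m * t ^ (Suc ?L - m)) + (\<Sum>m\<le>?L. x * esym xs m * t ^ (?L - m))"
    by (simp add: sum_distrib_left distrib_right sum.distrib mult.assoc mult.left_commute[of t] Suc_diff_le)
  also have "(\<Sum>m\<le>?L. esym xs m * t ^ (Suc ?L - m)) = t ^ Suc ?L + (\<Sum>m<?L. esym xs (Suc m) * t ^ (?L - m))"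
    by (simp only: lessThan_Suc_atMost[symmetric] sum.lessThan_Suc_shift) simp
  also have "(\<Sum>m<?L. esym xs (Suc m) * t ^ (?L - m)) = (\<Sum>m\<le>?L. esym xs (Suc m) * t ^ (?L - m))"
    by (simp add: lessThan_Suc_atMost[symmetric] esym_eq_0_if_length_less)
  also have "(\<Sum>m\<le>length (x # xs). esym (x # xs) m * t ^ (length (x # xs) - m))
      = t ^ Suc ?L + (\<Sum>m\<le>?L. esym (x # xs) (Suc m) * t ^ (?L - m))"
    by (simp only: length_Cons lessThan_Suc_atMost[symmetric] sum.lessThan_Suc_shift) simp
  ultimately show ?case by (simp add: sum.distrib algebra_simps)
qed

lemma nonneg_if_esym_nonneg:
  assumes "\<forall>m\<in>{1..length xs}. esym xs m \<ge> 0"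
  shows "\<forall>x\<in>set xs. x \<ge> 0"
proof (rule ccontr)
  assume "\<not> ?thesis"
  then obtain y where y: "y \<in> set xs" "y < 0" by auto
  define t where "t = - y"
  have t: "t > 0" using y t_def by simp
  have "(\<Prod>x\<leftarrow>xs. t + x) = 0"
    using y t_def by (simp add: prod_list_zero_iff)
  moreover have "(\<Sum>m\<le>length xs. esym xs m * t ^ (length xs - m))
      = t ^ length xs + (\<Sum>m\<in>{1..length xs}. esym xs m * t ^ (length xs - m))"
    by (simp add: atMost_atLeast0 sum.atLeast_Suc_atMost)
  moreover have "(\<Sum>m\<in>{1..length xs}. esym xs m * t ^ (length xs - m)) \<ge> 0"
    using assms t by (intro sum_nonneg) auto
  ultimately show False
    using prod_list_add_eq_esym[of t xs] t by (metis add_less_same_cancel1 not_le zero_less_power)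
qed

lemma S_eq_esym:
  assumes "\<forall>l\<ge>1. Re (mtrace (X ^\<^sub>m l)) = power_sum xs l"
  shows "S m X = esym xs m"
proof (induction m rule: less_induct)
  case (less m)
  show ?case
  proof (cases m)
    case 0
    then show ?thesis by simp
  next
    case (Suc m')
    have "S (Suc m') X = (1 / real (Suc m')) *
        (\<Sum>l\<in>{1..Suc m'}. (-1) ^ (l - 1) * power_sum xs l * esym xs (Suc m' - l))"
      unfolding S.simps using assms less Suc
      by (intro arg_cong[where f="\<lambda>t. (1 / real (Suc m')) * t"] sum.cong) auto
    also have "\<dots> = esym xs (Suc m')"
      using newton_identity[of m' xs] by (simp add: field_simps)
    finally show ?thesis using Suc by simp
  qed
qed

section \<open>Hermitian matrices and the spectral theorem\<close>

definition mat_app :: "nat \<Rightarrow> complex mat \<Rightarrow> (nat \<Rightarrow> complex) \<Rightarrow> nat \<Rightarrow> complex" where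
  "mat_app n A x = (\<lambda>i. \<Sum>j<n. A $$ (i, j) * x j)"

definition cinner :: "nat \<Rightarrow> (nat \<Rightarrow> complex) \<Rightarrow> (nat \<Rightarrow> complex) \<Rightarrow> complex" where
  "cinner n x y = (\<Sum>i<n. cnj (x i) * y i)"

definition hermitian :: "nat \<Rightarrow> complex mat \<Rightarrow> bool" where
  "hermitian n A \<longleftrightarrow> A \<in> carrier_mat n n \<and> (\<forall>i<n. \<forall>j<n. A $$ (i, j) = cnj (A $$ (j, i)))"

definition eigen_eq :: "nat \<Rightarrow> complex mat \<Rightarrow> (nat \<Rightarrow> complex) \<Rightarrow> complex \<Rightarrow> bool" where
  "eigen_eq n A x \<mu> \<longleftrightarrow> (\<forall>i<n. mat_app n A x i = \<mu> * x i)"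

definition orthonormal :: "nat \<Rightarrow> nat \<Rightarrow> (nat \<Rightarrow> nat \<Rightarrow> complex) \<Rightarrow> bool" where
  "orthonormal n k u \<longleftrightarrow> (\<forall>p<k. \<forall>q<k. cinner n (u p) (u q) = (if p = q then 1 else 0))"

lemma hermitian_carrier: "hermitian n A \<Longrightarrow> A \<in> carrier_mat n n"
  by (simp add: hermitian_def)

lemma mult_mat_entry_sum:
  assumes "A \<in> carrier_mat n n" "B \<in> carrier_mat n n" "i < n" "j < n"
  shows "(A * B) $$ (i, j) = (\<Sum>l<n. A $$ (i, l) * B $$ (l, j))"
  using assms by (simp add: scalar_prod_def atLeast0LessThan)

lemma mat_app_mult:
  assumes "A \<in> carrier_mat n n" "B \<in> carrier_mat n n" "i < n"
  shows "mat_app n (A * B) x i = mat_app n A (mat_app n B x) i"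
proof -
  have "mat_app n (A * B) x i = (\<Sum>j<n. \<Sum>l<n. A $$ (i, l) * (B $$ (l, j) * x j))"
    unfolding mat_app_def using assms
    by (intro sum.cong refl) (simp add: scalar_prod_def atLeast0LessThan sum_distrib_right mult.assoc)
  also have "\<dots> = mat_app n A (mat_app n B x) i"
    unfolding mat_app_def by (subst sum.swap) (simp add: sum_distrib_left)
  finally show ?thesis .
qed

lemma mat_app_mult3:
  assumes "A \<in> carrier_mat n n" "B \<in> carrier_mat n n" "C \<in> carrier_mat n n" "i < n"
  shows "mat_app n (A * B * C) x i = mat_app n A (mat_app n B (mat_app n C x)) i"
proof -
  have "mat_app n (A * B * C) x i = mat_app n (A * B) (mat_app n C x) i"
    using assms by (intro mat_app_mult) auto
  also have "\<dots> = mat_app n A (mat_app n B (mat_app n C x)) i"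
    using assms by (intro mat_app_mult) auto
  finally show ?thesis .
qed

lemma mat_app_one: "i < n \<Longrightarrow> mat_app n (1\<^sub>m n) x i = x i"
  unfolding mat_app_def by (simp add: sum.delta' if_distrib[where f="\<lambda>t. t * _"] cong: if_cong)

lemma mat_app_unit: "i < n \<Longrightarrow> j < n \<Longrightarrow> mat_app n A (\<lambda>l. if l = j then 1 else 0) i = A $$ (i, j)"
  unfolding mat_app_def by (simp add: if_distrib[where f="\<lambda>t. _ * t"] cong: if_cong)

lemma mat_app_cong: "(\<And>j. j < n \<Longrightarrow> x j = y j) \<Longrightarrow> mat_app n A x i = mat_app n A y i"
  unfolding mat_app_def by (intro sum.cong) auto

lemma mat_app_scale: "mat_app n A (\<lambda>j. c * x j) i = c * mat_app n A x i"
  unfolding mat_app_def by (simp add: sum_distrib_left algebra_simps)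

lemma cinner_cong:
  "(\<And>j. j < n \<Longrightarrow> x j = x' j) \<Longrightarrow> (\<And>j. j < n \<Longrightarrow> y j = y' j) \<Longrightarrow> cinner n x y = cinner n x' y'"
  unfolding cinner_def by (intro sum.cong) auto

lemma cinner_commute: "cinner n y x = cnj (cinner n x y)"
  unfolding cinner_def by (simp add: mult.commute)

lemma cinner_scale_right: "cinner n x (\<lambda>i. c * y i) = c * cinner n x y"
  unfolding cinner_def by (simp add: sum_distrib_left algebra_simps)

lemma cinner_self: "cinner n x x = of_real (\<Sum>i<n. (cmod (x i))\<^sup>2)"
  unfolding cinner_def of_real_sum complex_norm_square by (simp add: mult.commute)

lemma cinner_self_pos:
  fixes x :: "nat \<Rightarrow> complex"
  shows "i < n \<Longrightarrow> x i \<noteq> 0 \<Longrightarrow> (\<Sum>i<n. (cmod (x i))\<^sup>2) > 0"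
  by (rule sum_pos2[of _ i]) auto

lemma cinner_self_eq_0:
  assumes "cinner n x x = 0" "i < n"
  shows "x i = 0"
proof (rule ccontr)
  assume "x i \<noteq> 0"
  with assms(2) have pos: "(\<Sum>i<n. (cmod (x i))\<^sup>2) > 0" by (rule cinner_self_pos)
  have "complex_of_real (\<Sum>i<n. (cmod (x i))\<^sup>2) = 0" using assms(1) by (simp only: cinner_self)
  then have "(\<Sum>i<n. (cmod (x i))\<^sup>2) = 0" by (simp only: of_real_eq_0_iff)
  then show False using pos by simp
qed

lemma hermitian_cinner_mat_app:
  assumes "hermitian n A"
  shows "cinner n (mat_app n A x) y = cinner n x (mat_app n A y)"
proof -
  have "cinner n (mat_app n A x) y = (\<Sum>i<n. \<Sum>j<n. cnj (A $$ (i, j)) * cnj (x j) * y i)"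
    by (simp add: cinner_def mat_app_def sum_distrib_right)
  also have "\<dots> = (\<Sum>i<n. \<Sum>j<n. A $$ (j, i) * cnj (x j) * y i)"
    using assms unfolding hermitian_def by (intro sum.cong refl) (metis complex_cnj_cnj lessThan_iff)
  also have "\<dots> = (\<Sum>j<n. \<Sum>i<n. cnj (x j) * (A $$ (j, i) * y i))"
    by (subst sum.swap) (simp add: algebra_simps)
  also have "\<dots> = cinner n x (mat_app n A y)"
    by (simp add: cinner_def mat_app_def sum_distrib_left)
  finally show ?thesis .
qed

lemma hermitianI_cinner:
  assumes "A \<in> carrier_mat n n"
    and "\<And>x y. cinner n (mat_app n A x) y = cinner n x (mat_app n A y)"
  shows "hermitian n A"
  unfolding hermitian_def
proof (intro conjI assms allI impI)
  fix i j assume ij: "i < n" "j < n"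
  let ?e = "\<lambda>j l. if l = j then 1 else (0 :: complex)"
  have "cinner n (mat_app n A (?e i)) (?e j) = cnj (A $$ (j, i))"
    "cinner n (?e i) (mat_app n A (?e j)) = A $$ (i, j)"
    using ij by (simp_all add: cinner_def mat_app_unit if_distrib[where f=cnj] if_distrib[where f="\<lambda>t. _ * t"]
        if_distrib[where f="\<lambda>t. t * _"] cong: if_cong)
  then show "A $$ (i, j) = cnj (A $$ (j, i))" using assms(2) by metis
qed

lemma hermitian_sandwich:
  assumes Q: "hermitian n Q" and A: "hermitian n A"
  shows "hermitian n (Q * A * Q)"
proof (rule hermitianI_cinner)
  have Qc: "Q \<in> carrier_mat n n" and Ac: "A \<in> carrier_mat n n"
    using Q A by (simp_all add: hermitian_carrier)
  then show "Q * A * Q \<in> carrier_mat n n" by simp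
  have QAQ: "mat_app n (Q * A * Q) x i = mat_app n Q (mat_app n A (mat_app n Q x)) i" if "i < n" for x i
    using Qc Ac that by (intro mat_app_mult3)
  fix x y
  have "cinner n (mat_app n (Q * A * Q) x) y = cinner n (mat_app n Q (mat_app n A (mat_app n Q x))) y"
    by (intro cinner_cong) (simp_all add: QAQ)
  also have "\<dots> = cinner n x (mat_app n Q (mat_app n A (mat_app n Q y)))"
    by (simp add: hermitian_cinner_mat_app[OF Q] hermitian_cinner_mat_app[OF A])
  also have "\<dots> = cinner n x (mat_app n (Q * A * Q) y)"
    by (intro cinner_cong) (simp_all add: QAQ)
  finally show "cinner n (mat_app n (Q * A * Q) x) y = cinner n x (mat_app n (Q * A * Q) y)" .
qed

lemma pow_mat_Suc_left: "A \<in> carrier_mat n n \<Longrightarrow> A ^\<^sub>m Suc k = A * A ^\<^sub>m k"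
  by (induction k) (simp_all add: assoc_mult_mat[of _ n n _ n _ n])

text \<open>If C^(m+2) = 0, then |C^(m+1) x|^2 = <C^m x, C^(m+2) x> = 0, so a nilpotent hermitian
  matrix vanishes.\<close>

lemma hermitian_nilpotent_eq_0:
  assumes C: "hermitian n C" and nil: "C ^\<^sub>m Suc m = 0\<^sub>m n n"
  shows "C = 0\<^sub>m n n"
  using nil
proof (induction m)
  case 0
  then show ?case using hermitian_carrier[OF C] by simp
next
  case (Suc m)
  have Cc: "C \<in> carrier_mat n n" using C by (rule hermitian_carrier)
  have "C ^\<^sub>m Suc m = 0\<^sub>m n n"
  proof (rule eq_matI)
    fix i j assume "i < dim_row (0\<^sub>m n n :: complex mat)" "j < dim_col (0\<^sub>m n n :: complex mat)"
    then have ij: "i < n" "j < n" by auto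
    let ?e = "\<lambda>l. if l = j then 1 else (0 :: complex)"
    define y where "y = mat_app n (C ^\<^sub>m m) ?e"
    define z where "z = mat_app n (C ^\<^sub>m Suc m) ?e"
    have z: "z l = mat_app n C y l" if "l < n" for l
      unfolding y_def z_def
      by (simp only: pow_mat_Suc_left[OF Cc, of m] mat_app_mult[OF Cc pow_carrier_mat[OF Cc] that])
    have Cz: "mat_app n C z l = 0" if "l < n" for l
    proof -
      have "mat_app n C z l = mat_app n (C ^\<^sub>m Suc (Suc m)) ?e l"
        unfolding z_def
        by (simp only: pow_mat_Suc_left[OF Cc, of "Suc m"] mat_app_mult[OF Cc pow_carrier_mat[OF Cc] that])
      also have "\<dots> = 0" unfolding Suc.prems using that ij by (simp add: mat_app_unit)
      finally show ?thesis .
    qed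
    have "cinner n z z = cinner n (mat_app n C y) z" by (intro cinner_cong) (simp_all add: z)
    also have "\<dots> = cinner n y (mat_app n C z)" by (rule hermitian_cinner_mat_app[OF C])
    also have "\<dots> = 0" by (simp add: cinner_def Cz)
    finally have "z i = 0" using cinner_self_eq_0 ij by blast
    then show "(C ^\<^sub>m Suc m) $$ (i, j) = 0\<^sub>m n n $$ (i, j)"
      unfolding z_def using ij by (simp add: mat_app_unit)
  qed (use Cc in auto)
  then show ?case by (rule Suc.IH)
qed

lemma strictly_upper_triangular_pow_eq_0:
  assumes B: "B \<in> carrier_mat n n" and su: "\<And>i j. i < n \<Longrightarrow> j \<le> i \<Longrightarrow> B $$ (i, j) = 0"
  shows "i < n \<Longrightarrow> j < n \<Longrightarrow> j < i + m \<Longrightarrow> (B ^\<^sub>m m) $$ (i, j) = 0"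
proof (induction m arbitrary: j)
  case 0
  then show ?case using B by auto
next
  case (Suc m)
  have "(B ^\<^sub>m Suc m) $$ (i, j) = (\<Sum>l<n. (B ^\<^sub>m m) $$ (i, l) * B $$ (l, j))"
    using B Suc.prems by (simp add: scalar_prod_def atLeast0LessThan)
  also have "\<dots> = 0"
  proof (intro sum.neutral ballI)
    fix l assume l: "l \<in> {..<n}"
    show "(B ^\<^sub>m m) $$ (i, l) * B $$ (l, j) = 0"
    proof (cases "l < i + m")
      case True
      then show ?thesis using Suc l by simp
    next
      case False
      then show ?thesis using su Suc.prems l by simp
    qed
  qed
  finally show ?case .
qed

text \<open>By Schur decomposition, a matrix whose eigenvalues are all zero is similar to a strictly upper
  triangular matrix.\<close>

lemma char_poly_roots_0_imp_nilpotent: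
  fixes C :: "complex mat"
  assumes C: "C \<in> carrier_mat n n" and cp: "char_poly C = (\<Prod>a\<leftarrow>as. [:- a, 1:])"
    and zero: "\<forall>a\<in>set as. a = 0"
  shows "C ^\<^sub>m n = 0\<^sub>m n n"
proof -
  obtain B P P' where sd: "schur_decomposition C as = (B, P, P')"
    by (cases "schur_decomposition C as") auto
  have sim: "similar_mat_wit C B P P'" and ut: "upper_triangular B" and dg: "diag_mat B = as"
    using schur_decomposition[OF C cp sd] by auto
  have Bc: "B \<in> carrier_mat n n" and Pc: "P \<in> carrier_mat n n" and P'c: "P' \<in> carrier_mat n n"
    using similar_mat_witD2[OF C sim] by auto
  have "B $$ (i, j) = 0" if "i < n" "j \<le> i" for i j
  proof (cases "j = i")
    case True
    have "length as = n" "B $$ (i, i) = as ! i"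
      using dg Bc that by (auto simp: diag_mat_def)
    then show ?thesis using zero that True by simp
  next
    case False
    then show ?thesis using ut Bc that by auto
  qed
  then have "B ^\<^sub>m n = 0\<^sub>m n n"
    using strictly_upper_triangular_pow_eq_0[OF Bc] Bc by (intro eq_matI) auto
  then show ?thesis
    using similar_mat_wit_pow_id[OF sim, of n] Pc P'c by simp
qed

lemma exists_eigen_eq:
  assumes C: "C \<in> carrier_mat n n" and cp: "char_poly C = (\<Prod>a\<leftarrow>as. [:- a, 1:])"
    and \<mu>: "\<mu> \<in> set as"
  shows "\<exists>x. (\<exists>i<n. x i \<noteq> 0) \<and> eigen_eq n C x \<mu>"
proof -
  have "poly (char_poly C) \<mu> = 0"
    unfolding cp using \<mu> by (induction as) auto
  then obtain v where "eigenvector C v \<mu>"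
    using eigenvalue_root_char_poly[OF C] unfolding eigenvalue_def by blast
  then have v: "v \<in> carrier_vec n" "v \<noteq> 0\<^sub>v n" "C *\<^sub>v v = \<mu> \<cdot>\<^sub>v v"
    unfolding eigenvector_def using C by auto
  have "eigen_eq n C (\<lambda>i. v $ i) \<mu>"
    unfolding eigen_eq_def
  proof (intro allI impI)
    fix i assume "i < n"
    then have "mat_app n C (\<lambda>i. v $ i) i = (C *\<^sub>v v) $ i"
      using v(1) C by (simp add: mat_app_def scalar_prod_def atLeast0LessThan)
    also have "\<dots> = \<mu> * v $ i" using v \<open>i < n\<close> by simp
    finally show "mat_app n C (\<lambda>i. v $ i) i = \<mu> * v $ i" .
  qed
  moreover have "\<exists>i<n. v $ i \<noteq> 0" using v by (auto simp: vec_eq_iff)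
  ultimately show ?thesis by blast
qed

definition compl_proj :: "nat \<Rightarrow> nat \<Rightarrow> (nat \<Rightarrow> nat \<Rightarrow> complex) \<Rightarrow> complex mat" where
  "compl_proj n k u = mat n n (\<lambda>(i, j). (if i = j then 1 else 0) - (\<Sum>p<k. u p i * cnj (u p j)))"

lemma compl_proj_carrier: "compl_proj n k u \<in> carrier_mat n n"
  by (simp add: compl_proj_def)

lemma hermitian_compl_proj: "hermitian n (compl_proj n k u)"
  unfolding hermitian_def compl_proj_def by (simp add: mult.commute)

lemma mat_app_compl_proj:
  assumes "i < n"
  shows "mat_app n (compl_proj n k u) x i = x i - (\<Sum>p<k. u p i * cinner n (u p) x)"
proof -
  have "mat_app n (compl_proj n k u) x i
      = (\<Sum>j<n. (if i = j then x j else 0) - (\<Sum>p<k. u p i * cnj (u p j)) * x j)"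
    unfolding mat_app_def compl_proj_def using assms by (intro sum.cong) (auto simp: algebra_simps)
  also have "\<dots> = x i - (\<Sum>p<k. \<Sum>j<n. u p i * (cnj (u p j) * x j))"
    using assms by (simp add: sum_subtractf sum_distrib_right mult.assoc sum.swap[of _ "{..<n}" "{..<k}"])
  also have "\<dots> = x i - (\<Sum>p<k. u p i * cinner n (u p) x)"
    by (simp add: cinner_def sum_distrib_left)
  finally show ?thesis .
qed

lemma cinner_compl_proj:
  assumes "orthonormal n k u" "r < k"
  shows "cinner n (u r) (mat_app n (compl_proj n k u) x) = 0"
proof -
  have "cinner n (u r) (mat_app n (compl_proj n k u) x)
      = cinner n (u r) (\<lambda>i. x i - (\<Sum>p<k. u p i * cinner n (u p) x))"
    by (intro cinner_cong) (simp_all add: mat_app_compl_proj)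
  also have "\<dots> = cinner n (u r) x - (\<Sum>p<k. cinner n (u r) (u p) * cinner n (u p) x)"
    by (simp add: cinner_def algebra_simps sum_subtractf sum_distrib_left sum_distrib_right
        sum.swap[of _ "{..<n}" "{..<k}"])
  also have "\<dots> = 0"
    using assms by (simp add: orthonormal_def if_distrib[where f="\<lambda>t. t * _"] cong: if_cong)
  finally show ?thesis .
qed

lemma mat_app_compl_proj_orthogonal:
  "(\<forall>p<k. cinner n (u p) x = 0) \<Longrightarrow> i < n \<Longrightarrow> mat_app n (compl_proj n k u) x i = x i"
  by (simp add: mat_app_compl_proj)

text \<open>The rank-one terms of \<open>compl_proj n k u\<close> have total trace \<open>k < n\<close>, so it is not zero.\<close>

lemma exists_nonzero_orthogonal:
  assumes orth: "orthonormal n k u" and "k < n"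
  shows "\<exists>x. (\<forall>p<k. cinner n (u p) x = 0) \<and> (\<exists>i<n. x i \<noteq> 0)"
proof -
  have "\<exists>i<n. \<exists>j<n. compl_proj n k u $$ (i, j) \<noteq> 0"
  proof (rule ccontr)
    assume "\<not> ?thesis"
    then have diag: "(\<Sum>p<k. u p i * cnj (u p i)) = 1" if "i < n" for i
      using that by (force simp: compl_proj_def)
    have "(of_nat n :: complex) = (\<Sum>i<n. \<Sum>p<k. u p i * cnj (u p i))" by (simp add: diag)
    also have "\<dots> = (\<Sum>p<k. cinner n (u p) (u p))"
      by (simp add: cinner_def sum.swap[of _ "{..<n}" "{..<k}"] mult.commute)
    also have "\<dots> = of_nat k" using orth by (simp add: orthonormal_def)
    finally show False using \<open>k < n\<close> by simp
  qed
  then obtain i j where ij: "i < n" "j < n" "compl_proj n k u $$ (i, j) \<noteq> 0" by blast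
  define x where "x = mat_app n (compl_proj n k u) (\<lambda>l. if l = j then 1 else 0)"
  have "\<forall>p<k. cinner n (u p) x = 0" unfolding x_def using cinner_compl_proj[OF orth] by blast
  moreover have "x i \<noteq> 0" unfolding x_def using ij by (simp add: mat_app_unit)
  ultimately show ?thesis using ij by blast
qed

lemma hermitian_eigen_orthogonal:
  assumes A: "hermitian n A" and v: "eigen_eq n A v c" and "cinner n v x = 0"
  shows "cinner n v (mat_app n A x) = 0"
proof -
  have "cinner n v (mat_app n A x) = cinner n (mat_app n A v) x"
    by (simp add: hermitian_cinner_mat_app[OF A])
  also have "\<dots> = cinner n (\<lambda>i. c * v i) x"
    using v by (intro cinner_cong) (simp_all add: eigen_eq_def)
  also have "\<dots> = cnj c * cinner n v x"
    by (simp add: cinner_def sum_distrib_left mult.assoc)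
  finally show ?thesis using assms(3) by simp
qed

lemma hermitian_eigenvalue_real:
  assumes A: "hermitian n A" and x: "eigen_eq n A x \<mu>" and "i < n" "x i \<noteq> 0"
  shows "\<mu> = of_real (Re \<mu>)"
proof -
  have "cinner n x (mat_app n A x) = cinner n x (\<lambda>i. \<mu> * x i)"
    using x by (intro cinner_cong) (simp_all add: eigen_eq_def)
  then have \<mu>x: "cinner n x (mat_app n A x) = \<mu> * of_real (\<Sum>i<n. (cmod (x i))\<^sup>2)"
    by (simp add: cinner_scale_right cinner_self)
  have "cinner n x (mat_app n A x) = cnj (cinner n x (mat_app n A x))"
    by (metis cinner_commute hermitian_cinner_mat_app[OF A])
  then have "Im (cinner n x (mat_app n A x)) = 0" by (metis Reals_cnj_iff complex_is_Real_iff)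
  then have "Im \<mu> = 0" using \<mu>x cinner_self_pos[of i n x, OF assms(3,4)] by simp
  then show ?thesis by (simp add: complex_eq_iff)
qed

lemma compression_agrees_on_orthogonal:
  assumes A: "hermitian n A" and eig: "\<forall>p<k. eigen_eq n A (u p) (lam p)"
    and x: "\<forall>p<k. cinner n (u p) x = 0" and "i < n"
  shows "mat_app n (compl_proj n k u * A * compl_proj n k u) x i = mat_app n A x i"
proof -
  let ?Q = "compl_proj n k u"
  have "\<forall>p<k. cinner n (u p) (mat_app n A x) = 0"
    using hermitian_eigen_orthogonal[OF A] eig x by blast
  then have "mat_app n ?Q (mat_app n A x) i = mat_app n A x i"
    using \<open>i < n\<close> by (rule mat_app_compl_proj_orthogonal)
  moreover have "mat_app n ?Q (mat_app n A (mat_app n ?Q x)) i = mat_app n ?Q (mat_app n A x) i"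
    using x by (intro mat_app_cong) (auto intro: mat_app_cong simp: mat_app_compl_proj_orthogonal)
  ultimately show ?thesis
    using A \<open>i < n\<close> by (simp add: mat_app_mult3 compl_proj_carrier hermitian_carrier)
qed

lemma compression_eigenvector_orthogonal:
  assumes orth: "orthonormal n k u" and A: "A \<in> carrier_mat n n" and "\<mu> \<noteq> 0"
    and x: "eigen_eq n (compl_proj n k u * A * compl_proj n k u) x \<mu>" and "p < k"
  shows "cinner n (u p) x = 0"
proof -
  let ?Q = "compl_proj n k u"
  have "cinner n (u p) x = cinner n (u p) (\<lambda>i. inverse \<mu> * mat_app n ?Q (mat_app n A (mat_app n ?Q x)) i)"
    using x \<open>\<mu> \<noteq> 0\<close> A
    by (intro cinner_cong) (simp_all add: eigen_eq_def compl_proj_carrier flip: mat_app_mult3)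
  then show ?thesis
    using cinner_compl_proj[OF orth \<open>p < k\<close>] by (simp add: cinner_scale_right)
qed

text \<open>An eigenvector of the compression \<open>C = Q A Q\<close> of \<open>A\<close> to the orthogonal complement \<open>W\<close>
  of the \<open>u p\<close> lies in \<open>W\<close> if its eigenvalue is nonzero; if all eigenvalues of \<open>C\<close> vanish,
  the hermitian matrix \<open>C\<close> is nilpotent, hence zero, so \<open>A\<close> vanishes on \<open>W\<close>.\<close>

lemma exists_orthogonal_eigenvector:
  assumes A: "hermitian n A" and "k < n" and orth: "orthonormal n k u"
    and eig: "\<forall>p<k. eigen_eq n A (u p) (lam p)"
  shows "\<exists>x \<mu>. (\<forall>p<k. cinner n (u p) x = 0) \<and> (\<exists>i<n. x i \<noteq> 0) \<and> eigen_eq n A x \<mu>"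
proof -
  define C where "C = compl_proj n k u * A * compl_proj n k u"
  have Ac: "A \<in> carrier_mat n n" using A by (rule hermitian_carrier)
  have Cc: "C \<in> carrier_mat n n"
    unfolding C_def by (rule mult_carrier_mat[OF mult_carrier_mat[OF compl_proj_carrier Ac] compl_proj_carrier])
  have C_A: "mat_app n C x i = mat_app n A x i" if "\<forall>p<k. cinner n (u p) x = 0" "i < n" for x i
    unfolding C_def using A eig that by (rule compression_agrees_on_orthogonal)
  obtain as where cp: "char_poly C = (\<Prod>a\<leftarrow>as. [:- a, 1:])"
    using char_poly_factorized[OF Cc] by blast
  show ?thesis
  proof (cases "\<exists>\<mu>\<in>set as. \<mu> \<noteq> 0")
    case True
    then obtain \<mu> where \<mu>: "\<mu> \<in> set as" "\<mu> \<noteq> 0" by blast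
    obtain x where x: "\<exists>i<n. x i \<noteq> 0" "eigen_eq n C x \<mu>"
      using exists_eigen_eq[OF Cc cp \<mu>(1)] by blast
    have W: "\<forall>p<k. cinner n (u p) x = 0"
      using compression_eigenvector_orthogonal[OF orth Ac \<mu>(2)] x(2) unfolding C_def by blast
    then have "eigen_eq n A x \<mu>"
      using x(2) C_A by (simp add: eigen_eq_def)
    then show ?thesis using W x(1) by blast
  next
    case False
    have "hermitian n C"
      unfolding C_def by (intro hermitian_sandwich hermitian_compl_proj A)
    moreover have "C ^\<^sub>m Suc (n - 1) = 0\<^sub>m n n"
      using char_poly_roots_0_imp_nilpotent[OF Cc cp] False \<open>k < n\<close> by (simp add: Suc_diff_1)
    ultimately have C0: "C = 0\<^sub>m n n" by (rule hermitian_nilpotent_eq_0)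
    obtain x where x: "\<forall>p<k. cinner n (u p) x = 0" "\<exists>i<n. x i \<noteq> 0"
      using exists_nonzero_orthogonal[OF orth \<open>k < n\<close>] by blast
    have "eigen_eq n A x 0"
      using C_A[OF x(1)] by (simp add: eigen_eq_def C0 mat_app_def)
    then show ?thesis using x by blast
  qed
qed

lemma exists_unit_orthogonal_eigenvector:
  assumes A: "hermitian n A" and "k < n" and orth: "orthonormal n k u"
    and eig: "\<forall>p<k. eigen_eq n A (u p) (lam p)"
  shows "\<exists>w \<mu>. cinner n w w = 1 \<and> (\<forall>p<k. cinner n (u p) w = 0) \<and> eigen_eq n A w (of_real \<mu>)"
proof -
  obtain x \<mu> i where x: "\<forall>p<k. cinner n (u p) x = 0" "i < n" "x i \<noteq> 0" "eigen_eq n A x \<mu>"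
    using exists_orthogonal_eigenvector[OF assms] by blast
  define r where "r = (\<Sum>i<n. (cmod (x i))\<^sup>2)"
  have r: "r > 0" unfolding r_def using cinner_self_pos[of i n x, OF x(2,3)] .
  define c where "c = complex_of_real (sqrt r)"
  define w where "w = (\<lambda>i. inverse c * x i)"
  have "cnj c * c = of_real r" using r by (simp add: c_def flip: of_real_mult)
  moreover have "cinner n w w = inverse (cnj c * c) * cinner n x x"
    by (simp add: w_def cinner_def sum_distrib_left algebra_simps)
  ultimately have "cinner n w w = 1"
    using r by (simp add: cinner_self flip: r_def)
  moreover have "\<forall>p<k. cinner n (u p) w = 0"
    using x(1) by (simp add: w_def cinner_scale_right)
  moreover have "eigen_eq n A w (of_real (Re \<mu>))"
    using x(4) hermitian_eigenvalue_real[OF A x(4,2,3)]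
    by (simp add: w_def eigen_eq_def mat_app_scale)
  ultimately show ?thesis by blast
qed

lemma orthonormal_extend:
  assumes "orthonormal n k u" "cinner n w w = 1" "\<forall>p<k. cinner n (u p) w = 0"
  shows "orthonormal n (Suc k) (u(k := w))"
  unfolding orthonormal_def
proof (intro allI impI)
  fix p q assume "p < Suc k" "q < Suc k"
  then consider "p < k" "q < k" | "p = k" "q < k" | "p < k" "q = k" | "p = k" "q = k"
    by (auto simp: less_Suc_eq)
  then show "cinner n ((u(k := w)) p) ((u(k := w)) q) = (if p = q then 1 else 0)"
  proof cases
    case 1
    then show ?thesis using assms(1) by (simp add: orthonormal_def)
  next
    case 2
    then show ?thesis using assms(3) cinner_commute[of n w "u q"] by simp
  next
    case 3
    then show ?thesis using assms(3) by simp
  next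
    case 4
    then show ?thesis using assms(2) by simp
  qed
qed

definition eigenbasis :: "nat \<Rightarrow> complex mat \<Rightarrow> (nat \<Rightarrow> nat \<Rightarrow> complex) \<Rightarrow> (nat \<Rightarrow> real) \<Rightarrow> bool" where
  "eigenbasis n A u lam \<longleftrightarrow> orthonormal n n u \<and> (\<forall>p<n. eigen_eq n A (u p) (of_real (lam p)))"

lemma hermitian_eigenbasis:
  assumes A: "hermitian n A"
  obtains u lam where "eigenbasis n A u lam"
proof -
  have "\<exists>u lam. orthonormal n k u \<and> (\<forall>p<k. eigen_eq n A (u p) (of_real (lam p)))" if "k \<le> n" for k
    using that
  proof (induction k)
    case 0
    then show ?case by (simp add: orthonormal_def)
  next
    case (Suc k)
    then obtain u lam where u: "orthonormal n k u" "\<forall>p<k. eigen_eq n A (u p) (of_real (lam p))"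
      by auto
    obtain w \<mu> where w: "cinner n w w = 1" "\<forall>p<k. cinner n (u p) w = 0" "eigen_eq n A w (of_real \<mu>)"
      using exists_unit_orthogonal_eigenvector[OF A _ u] Suc.prems by auto
    have "orthonormal n (Suc k) (u(k := w))" by (rule orthonormal_extend[OF u(1) w(1,2)])
    moreover have "\<forall>p<Suc k. eigen_eq n A ((u(k := w)) p) (of_real ((lam(k := \<mu>)) p))"
      using u(2) w(3) by (auto simp: less_Suc_eq)
    ultimately show ?case by blast
  qed
  then show ?thesis using that unfolding eigenbasis_def by blast
qed

lemma orthonormal_complete:
  assumes orth: "orthonormal n n u" and ij: "i < n" "j < n"
  shows "(\<Sum>p<n. u p i * cnj (u p j)) = (if i = j then 1 else 0)"
proof -
  define U where "U = mat n n (\<lambda>(i, p). u p i)"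
  define V where "V = mat n n (\<lambda>(p, i). cnj (u p i))"
  have Uc: "U \<in> carrier_mat n n" and Vc: "V \<in> carrier_mat n n" unfolding U_def V_def by auto
  have "V * U = 1\<^sub>m n"
  proof (rule eq_matI)
    fix p q assume "p < dim_row (1\<^sub>m n :: complex mat)" "q < dim_col (1\<^sub>m n :: complex mat)"
    then have pq: "p < n" "q < n" by auto
    have "(V * U) $$ (p, q) = cinner n (u p) (u q)"
      unfolding cinner_def using mult_mat_entry_sum[OF Vc Uc pq] pq by (simp add: U_def V_def)
    then show "(V * U) $$ (p, q) = 1\<^sub>m n $$ (p, q)" using orth pq by (simp add: orthonormal_def)
  qed (use Uc Vc in auto)
  then have "U * V = 1\<^sub>m n" using mat_mult_left_right_inverse[OF Vc Uc] by simp
  moreover have "(U * V) $$ (i, j) = (\<Sum>p<n. u p i * cnj (u p j))"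
    using mult_mat_entry_sum[OF Uc Vc ij] ij by (simp add: U_def V_def)
  ultimately show ?thesis using ij by simp
qed

lemma eigen_expansion:
  assumes orth: "orthonormal n n u" and M: "M \<in> carrier_mat n n"
    and eig: "\<forall>p<n. eigen_eq n M (u p) (c p)" and ij: "i < n" "j < n"
  shows "M $$ (i, j) = (\<Sum>p<n. c p * u p i * cnj (u p j))"
proof -
  have "M $$ (i, j) = (\<Sum>l<n. M $$ (i, l) * (\<Sum>p<n. u p l * cnj (u p j)))"
    using ij by (simp add: orthonormal_complete[OF orth] if_distrib[where f="\<lambda>t. _ * t"] cong: if_cong)
  also have "\<dots> = (\<Sum>l<n. \<Sum>p<n. M $$ (i, l) * u p l * cnj (u p j))"
    by (simp add: sum_distrib_left mult.assoc)
  also have "\<dots> = (\<Sum>p<n. \<Sum>l<n. M $$ (i, l) * u p l * cnj (u p j))"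
    by (rule sum.swap)
  also have "\<dots> = (\<Sum>p<n. mat_app n M (u p) i * cnj (u p j))"
    by (simp add: mat_app_def sum_distrib_right)
  also have "\<dots> = (\<Sum>p<n. c p * u p i * cnj (u p j))"
    using eig ij by (intro sum.cong) (simp_all add: eigen_eq_def)
  finally show ?thesis .
qed

lemma eigen_eq_pow:
  assumes A: "A \<in> carrier_mat n n" and x: "eigen_eq n A x c"
  shows "eigen_eq n (A ^\<^sub>m m) x (c ^ m)"
  unfolding eigen_eq_def
proof (induction m)
  case 0
  then show ?case using A by (simp add: mat_app_one)
next
  case (Suc m)
  show ?case
  proof (intro allI impI)
    fix i assume i: "i < n"
    have "mat_app n (A ^\<^sub>m Suc m) x i = mat_app n (A ^\<^sub>m m) (mat_app n A x) i"
      using A i by (simp add: mat_app_mult)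
    also have "\<dots> = mat_app n (A ^\<^sub>m m) (\<lambda>j. c * x j) i"
      using x by (intro mat_app_cong) (simp add: eigen_eq_def)
    also have "\<dots> = c ^ Suc m * x i"
      using Suc.IH i by (simp add: mat_app_scale)
    finally show "mat_app n (A ^\<^sub>m Suc m) x i = c ^ Suc m * x i" .
  qed
qed

lemma trace_pow_eigenbasis:
  assumes A: "A \<in> carrier_mat n n" and basis: "eigenbasis n A u lam"
  shows "Re (mtrace (A ^\<^sub>m m)) = power_sum (map lam [0..<n]) m"
proof -
  have orth: "orthonormal n n u"
    and eig: "\<forall>p<n. eigen_eq n (A ^\<^sub>m m) (u p) (of_real (lam p) ^ m)"
    using basis eigen_eq_pow[OF A] unfolding eigenbasis_def by auto
  have "mtrace (A ^\<^sub>m m) = (\<Sum>i<n. \<Sum>p<n. of_real (lam p) ^ m * u p i * cnj (u p i))"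
    unfolding mtrace_def using A
    by (intro sum.cong) (simp_all add: eigen_expansion[OF orth pow_carrier_mat[OF A] eig])
  also have "\<dots> = (\<Sum>p<n. of_real (lam p) ^ m * cinner n (u p) (u p))"
    by (subst sum.swap) (simp add: cinner_def sum_distrib_left algebra_simps)
  also have "\<dots> = (\<Sum>p<n. of_real (lam p ^ m))"
    using orth by (simp add: orthonormal_def)
  finally have "Re (mtrace (A ^\<^sub>m m)) = (\<Sum>p<n. lam p ^ m)"
    by simp
  also have "\<dots> = power_sum (map lam [0..<n]) m"
    unfolding power_sum_def by (simp add: sum_list_distinct_conv_sum_set atLeast0LessThan)
  finally show ?thesis .
qed

section \<open>Positive semidefinite matrices\<close>

definition qform :: "nat \<Rightarrow> complex mat \<Rightarrow> (nat \<Rightarrow> complex) \<Rightarrow> complex" where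
  "qform n A v = (\<Sum>i<n. \<Sum>j<n. cnj (v i) * A $$ (i, j) * v j)"

lemma psd_iff_qform:
  "psd n A \<longleftrightarrow> A \<in> carrier_mat n n \<and> (\<forall>v. Im (qform n A v) = 0 \<and> Re (qform n A v) \<ge> 0)"
  unfolding psd_def qform_def ..

lemma qform_eigenbasis:
  assumes A: "A \<in> carrier_mat n n" and basis: "eigenbasis n A u lam"
  shows "qform n A v = of_real (\<Sum>p<n. lam p * (cmod (cinner n (u p) v))\<^sup>2)"
proof -
  have entry: "A $$ (i, j) = (\<Sum>p<n. of_real (lam p) * u p i * cnj (u p j))" if "i < n" "j < n" for i j
    using basis unfolding eigenbasis_def by (intro eigen_expansion[OF _ A _ that]) auto
  have "qform n A v = (\<Sum>i<n. \<Sum>j<n. \<Sum>p<n. of_real (lam p) * (cnj (v i) * u p i) * (cnj (u p j) * v j))"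
    unfolding qform_def
    by (intro sum.cong refl) (simp add: entry sum_distrib_left sum_distrib_right algebra_simps)
  also have "\<dots> = (\<Sum>p<n. \<Sum>i<n. \<Sum>j<n. of_real (lam p) * (cnj (v i) * u p i) * (cnj (u p j) * v j))"
    by (subst sum.swap, rule sum.cong[OF refl], rule sum.swap)
  also have "\<dots> = (\<Sum>p<n. of_real (lam p) * ((\<Sum>i<n. cnj (v i) * u p i) * (\<Sum>j<n. cnj (u p j) * v j)))"
    by (rule sum.cong[OF refl]) (simp only: sum_product, simp only: sum_distrib_left mult.assoc)
  also have "\<dots> = (\<Sum>p<n. of_real (lam p) * (cnj (cinner n (u p) v) * cinner n (u p) v))"
    unfolding cinner_def by (simp add: mult.commute)
  also have "\<dots> = of_real (\<Sum>p<n. lam p * (cmod (cinner n (u p) v))\<^sup>2)"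
    unfolding of_real_sum of_real_mult complex_norm_square by (simp add: mult.commute)
  finally show ?thesis .
qed

lemma psd_iff_eigenbasis_nonneg:
  assumes A: "A \<in> carrier_mat n n" and basis: "eigenbasis n A u lam"
  shows "psd n A \<longleftrightarrow> (\<forall>p<n. lam p \<ge> 0)"
proof
  assume psd: "psd n A"
  show "\<forall>p<n. lam p \<ge> 0"
  proof (intro allI impI)
    fix q assume q: "q < n"
    have "(\<Sum>p<n. lam p * (cmod (cinner n (u p) (u q)))\<^sup>2) = (\<Sum>p<n. if p = q then lam p else 0)"
      using basis q by (intro sum.cong) (auto simp: eigenbasis_def orthonormal_def)
    then have "qform n A (u q) = of_real (lam q)"
      using q by (simp add: qform_eigenbasis[OF A basis])
    moreover have "Re (qform n A (u q)) \<ge> 0" using psd by (simp add: psd_iff_qform)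
    ultimately show "lam q \<ge> 0" by simp
  qed
next
  assume "\<forall>p<n. lam p \<ge> 0"
  then show "psd n A"
    using A by (auto simp: psd_iff_qform qform_eigenbasis[OF A basis] intro!: sum_nonneg)
qed

theorem hermitian_psd_iff_S_nonneg:
  assumes A: "hermitian n A"
  shows "psd n A \<longleftrightarrow> (\<forall>m\<in>{1..n}. S m A \<ge> 0)"
proof -
  obtain u lam where basis: "eigenbasis n A u lam"
    using hermitian_eigenbasis[OF A] .
  have Ac: "A \<in> carrier_mat n n" using A by (rule hermitian_carrier)
  define xs where "xs = map lam [0..<n]"
  have S: "S m A = esym xs m" for m
    unfolding xs_def using trace_pow_eigenbasis[OF Ac basis] by (intro S_eq_esym) blast
  have "psd n A \<longleftrightarrow> (\<forall>x\<in>set xs. x \<ge> 0)"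
    unfolding psd_iff_eigenbasis_nonneg[OF Ac basis] xs_def by auto
  also have "\<dots> \<longleftrightarrow> (\<forall>m\<in>{1..length xs}. esym xs m \<ge> 0)"
    using esym_nonneg nonneg_if_esym_nonneg by blast
  finally show ?thesis by (simp add: S xs_def)
qed

lemma qform_sparse:
  assumes "I \<subseteq> {..<n}" "\<And>a. a \<notin> I \<Longrightarrow> v a = 0"
  shows "qform n A v = (\<Sum>a\<in>I. \<Sum>b\<in>I. cnj (v a) * A $$ (a, b) * v b)"
proof -
  have "qform n A v = (\<Sum>a\<in>I. \<Sum>b<n. cnj (v a) * A $$ (a, b) * v b)"
    unfolding qform_def using assms by (intro sum.mono_neutral_right) auto
  also have "\<dots> = (\<Sum>a\<in>I. \<Sum>b\<in>I. cnj (v a) * A $$ (a, b) * v b)"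
    using assms by (intro sum.cong refl sum.mono_neutral_right) auto
  finally show ?thesis .
qed

text \<open>Polarization: the quadratic form is real on the vectors \<open>e\<^sub>i + e\<^sub>j\<close> and \<open>e\<^sub>i + \<i> e\<^sub>j\<close>.\<close>

lemma psd_imp_hermitian:
  assumes "psd n A"
  shows "hermitian n A"
proof -
  have Ac: "A \<in> carrier_mat n n" and real: "\<And>v. Im (qform n A v) = 0"
    using assms by (auto simp: psd_iff_qform)
  have diag: "Im (A $$ (i, i)) = 0" if "i < n" for i
  proof -
    have "qform n A (\<lambda>a. if a = i then 1 else 0) = A $$ (i, i)"
      using that by (subst qform_sparse[where I="{i}"]) auto
    then show ?thesis using real by metis
  qed
  have "A $$ (i, j) = cnj (A $$ (j, i))" if ij: "i < n" "j < n" for i j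
  proof (cases "i = j")
    case True
    then show ?thesis using diag ij by (simp add: complex_eq_iff)
  next
    case False
    have "qform n A (\<lambda>a. if a = i then 1 else if a = j then 1 else 0)
        = A $$ (i, i) + A $$ (i, j) + A $$ (j, i) + A $$ (j, j)"
      using ij False by (subst qform_sparse[where I="{i, j}"]) auto
    then have "Im (A $$ (i, i) + A $$ (i, j) + A $$ (j, i) + A $$ (j, j)) = 0" using real by metis
    then have im: "Im (A $$ (i, j) + A $$ (j, i)) = 0" using diag ij by simp
    have "qform n A (\<lambda>a. if a = i then 1 else if a = j then \<i> else 0)
        = A $$ (i, i) + \<i> * A $$ (i, j) - \<i> * A $$ (j, i) + A $$ (j, j)"
      using ij False by (subst qform_sparse[where I="{i, j}"]) (auto simp: algebra_simps)
    then have "Im (A $$ (i, i) + \<i> * A $$ (i, j) - \<i> * A $$ (j, i) + A $$ (j, j)) = 0" using real by metis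
    then have re: "Re (A $$ (i, j)) - Re (A $$ (j, i)) = 0" using diag ij by simp
    show ?thesis using im re by (simp add: complex_eq_iff)
  qed
  then show ?thesis unfolding hermitian_def using Ac by blast
qed

lemma psd_gram_factor:
  assumes X: "psd n X"
  obtains w where "\<And>p q. p < n \<Longrightarrow> q < n \<Longrightarrow> X $$ (p, q) = (\<Sum>t<n. w t p * cnj (w t q))"
proof -
  obtain u lam where basis: "eigenbasis n X u lam"
    using hermitian_eigenbasis[OF psd_imp_hermitian[OF X]] .
  have Xc: "X \<in> carrier_mat n n" using X by (simp add: psd_def)
  have nonneg: "lam t \<ge> 0" if "t < n" for t
    using psd_iff_eigenbasis_nonneg[OF Xc basis] X that by blast
  define w where "w t p = complex_of_real (sqrt (lam t)) * u t p" for t p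
  have "X $$ (p, q) = (\<Sum>t<n. w t p * cnj (w t q))" if "p < n" "q < n" for p q
  proof -
    have "X $$ (p, q) = (\<Sum>t<n. of_real (lam t) * u t p * cnj (u t q))"
      using basis unfolding eigenbasis_def by (intro eigen_expansion[OF _ Xc _ that]) auto
    also have "\<dots> = (\<Sum>t<n. w t p * cnj (w t q))"
    proof (intro sum.cong refl)
      fix t assume "t \<in> {..<n}"
      then have "of_real (sqrt (lam t)) * of_real (sqrt (lam t)) = (of_real (lam t) :: complex)"
        using nonneg by (simp flip: of_real_mult)
      then show "of_real (lam t) * u t p * cnj (u t q) = w t p * cnj (w t q)"
        unfolding w_def by (simp add: algebra_simps)
    qed
    finally show ?thesis .
  qed
  then show ?thesis using that by blast
qed

lemma sum_swap_innermost:
  "(\<Sum>a\<in>A. \<Sum>t\<in>T. \<Sum>x\<in>X. \<Sum>y\<in>Y. f a t x y) = (\<Sum>t\<in>T. \<Sum>x\<in>X. \<Sum>y\<in>Y. \<Sum>a\<in>A. f a t x y)"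
  by (subst sum.swap) (intro sum.cong refl, subst sum.swap, intro sum.cong refl, rule sum.swap)

lemma qform_congruence:
  assumes "\<And>r c. r < N \<Longrightarrow> c < N \<Longrightarrow>
      M $$ (r, c) = (\<Sum>t<T. \<Sum>x<m. \<Sum>y<m. cnj (G t x r) * Y $$ (x, y) * G t y c)"
  shows "qform N M v = (\<Sum>t<T. qform m Y (\<lambda>x. \<Sum>r<N. G t x r * v r))"
proof -
  have "qform N M v
      = (\<Sum>r<N. \<Sum>c<N. \<Sum>t<T. \<Sum>x<m. \<Sum>y<m. cnj (v r) * cnj (G t x r) * Y $$ (x, y) * G t y c * v c)"
    unfolding qform_def using assms
    by (intro sum.cong refl) (simp add: sum_distrib_left sum_distrib_right mult.assoc)
  also have "\<dots> = (\<Sum>r<N. \<Sum>t<T. \<Sum>x<m. \<Sum>y<m. \<Sum>c<N.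
      cnj (v r) * cnj (G t x r) * Y $$ (x, y) * G t y c * v c)"
    by (rule sum.cong[OF refl], rule sum_swap_innermost)
  also have "\<dots> = (\<Sum>t<T. \<Sum>x<m. \<Sum>y<m. \<Sum>r<N. \<Sum>c<N.
      cnj (v r) * cnj (G t x r) * Y $$ (x, y) * G t y c * v c)"
    by (rule sum_swap_innermost)
  also have "\<dots> = (\<Sum>t<T. qform m Y (\<lambda>x. \<Sum>r<N. G t x r * v r))"
    unfolding qform_def
    by (intro sum.cong refl)
      (simp add: sum_distrib_left sum_distrib_right mult.assoc mult.left_commute, rule sum.swap)
  finally show ?thesis .
qed

lemma psd_congruence:
  assumes Y: "psd m Y" and M: "M \<in> carrier_mat N N"
    and entries: "\<And>r c. r < N \<Longrightarrow> c < N \<Longrightarrow>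
      M $$ (r, c) = (\<Sum>t<T. \<Sum>x<m. \<Sum>y<m. cnj (G t x r) * Y $$ (x, y) * G t y c)"
  shows "psd N M"
proof -
  have "qform N M v = (\<Sum>t<T. qform m Y (\<lambda>x. \<Sum>r<N. G t x r * v r))" for v
    by (rule qform_congruence[OF entries])
  then show ?thesis using Y M by (auto simp: psd_iff_qform Im_sum Re_sum intro!: sum_nonneg)
qed

lemma qform_lincomb:
  assumes "A \<in> carrier_mat n n" "B \<in> carrier_mat n n"
  shows "qform n (a \<cdot>\<^sub>m A + b \<cdot>\<^sub>m B) v = a * qform n A v + b * qform n B v"
proof -
  have "qform n (a \<cdot>\<^sub>m A + b \<cdot>\<^sub>m B) v
      = (\<Sum>i<n. \<Sum>j<n. a * (cnj (v i) * A $$ (i, j) * v j) + b * (cnj (v i) * B $$ (i, j) * v j))"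
    unfolding qform_def using assms by (intro sum.cong refl) (simp add: algebra_simps)
  also have "\<dots> = a * qform n A v + b * qform n B v"
    unfolding qform_def by (simp only: sum.distrib sum_distrib_left)
  finally show ?thesis .
qed

lemma psd_nonneg_lincomb:
  assumes A: "psd n A" and B: "psd n B" and "a \<ge> 0" "b \<ge> 0"
  shows "psd n (complex_of_real a \<cdot>\<^sub>m A + complex_of_real b \<cdot>\<^sub>m B)"
proof -
  have Ac: "A \<in> carrier_mat n n" and Bc: "B \<in> carrier_mat n n"
    using A B by (simp_all add: psd_iff_qform)
  have "Im (qform n A v) = 0" "Re (qform n A v) \<ge> 0" "Im (qform n B v) = 0" "Re (qform n B v) \<ge> 0" for v
    using A B by (simp_all add: psd_iff_qform)
  then show ?thesis
    using Ac Bc assms(3,4) by (simp add: psd_iff_qform qform_lincomb[OF Ac Bc])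
qed

lemma hermitian_smult_diff:
  assumes A: "hermitian n A" and B: "hermitian n B"
  shows "hermitian n (complex_of_real a \<cdot>\<^sub>m A - complex_of_real b \<cdot>\<^sub>m B)"
proof -
  have Ac: "A \<in> carrier_mat n n" and Bc: "B \<in> carrier_mat n n"
    using A B by (simp_all add: hermitian_carrier)
  have "(complex_of_real a \<cdot>\<^sub>m A - complex_of_real b \<cdot>\<^sub>m B) $$ (i, j)
      = cnj ((complex_of_real a \<cdot>\<^sub>m A - complex_of_real b \<cdot>\<^sub>m B) $$ (j, i))" if "i < n" "j < n" for i j
  proof -
    have "A $$ (i, j) = cnj (A $$ (j, i))" "B $$ (i, j) = cnj (B $$ (j, i))"
      using A B that unfolding hermitian_def by blast+
    then show ?thesis using that Ac Bc by simp
  qed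
  moreover have "complex_of_real a \<cdot>\<^sub>m A - complex_of_real b \<cdot>\<^sub>m B \<in> carrier_mat n n"
    using Bc by (intro minus_carrier_mat smult_carrier_mat)
  ultimately show ?thesis unfolding hermitian_def by blast
qed

section \<open>Choi operators\<close>

lemma block_index_less:
  fixes i a d1 d2 :: nat
  assumes "i < d1" "a < d2"
  shows "i * d2 + a < d1 * d2"
proof -
  have "i * d2 + a < Suc i * d2" using assms(2) by simp
  also have "\<dots> \<le> d1 * d2" using assms(1) by (intro mult_le_mono1) simp
  finally show ?thesis .
qed

lemma mod_less_of_less_mult: "r < d1 * d2 \<Longrightarrow> r mod d2 < (d2 :: nat)"
  by (metis mod_less_divisor mult_0_right not_gr0 not_less0)

lemma choi_carrier: "choi d1 d2 \<Lambda> \<in> carrier_mat (d1 * d2) (d1 * d2)"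
  by (simp add: choi_def)

lemma choi_block_entry:
  "i < d1 \<Longrightarrow> j < d1 \<Longrightarrow> a < d2 \<Longrightarrow> b < d2 \<Longrightarrow>
    choi d1 d2 \<Lambda> $$ (i * d2 + a, j * d2 + b) = \<Lambda> (unit_mat d1 i j) $$ (a, b)"
  by (simp add: choi_def block_index_less)

definition ptrace :: "nat \<Rightarrow> nat \<Rightarrow> complex mat \<Rightarrow> complex mat" where
  "ptrace d1 d2 X = mat d1 d1 (\<lambda>(i, j). \<Sum>a<d2. X $$ (i * d2 + a, j * d2 + a))"

lemma ptrace_choi:
  assumes "channel d1 d2 \<Lambda>"
  shows "ptrace d1 d2 (choi d1 d2 \<Lambda>) = 1\<^sub>m d1"
proof (rule eq_matI)
  fix i j assume "i < dim_row (1\<^sub>m d1 :: complex mat)" "j < dim_col (1\<^sub>m d1 :: complex mat)"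
  then have ij: "i < d1" "j < d1" by auto
  have "unit_mat d1 i j \<in> carrier_mat d1 d1" by (simp add: unit_mat_def)
  then have \<Lambda>U: "\<Lambda> (unit_mat d1 i j) \<in> carrier_mat d2 d2"
      "mtrace (\<Lambda> (unit_mat d1 i j)) = mtrace (unit_mat d1 i j)"
    using assms unfolding channel_def by blast+
  have "ptrace d1 d2 (choi d1 d2 \<Lambda>) $$ (i, j) = (\<Sum>a<d2. \<Lambda> (unit_mat d1 i j) $$ (a, a))"
    using ij by (simp add: ptrace_def choi_block_entry)
  also have "\<dots> = mtrace (unit_mat d1 i j)"
    using \<Lambda>U by (simp add: mtrace_def)
  also have "\<dots> = 1\<^sub>m d1 $$ (i, j)"
    using ij by (simp add: mtrace_def unit_mat_def sum.delta' cong: if_cong)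
  finally show "ptrace d1 d2 (choi d1 d2 \<Lambda>) $$ (i, j) = 1\<^sub>m d1 $$ (i, j)" .
qed (simp_all add: ptrace_def)

lemma ptrace_smult_diff:
  assumes "A \<in> carrier_mat (d1 * d2) (d1 * d2)" "B \<in> carrier_mat (d1 * d2) (d1 * d2)"
  shows "ptrace d1 d2 (a \<cdot>\<^sub>m A - b \<cdot>\<^sub>m B) = a \<cdot>\<^sub>m ptrace d1 d2 A - b \<cdot>\<^sub>m ptrace d1 d2 B"
  using assms
  by (intro eq_matI) (simp_all add: ptrace_def block_index_less sum_subtractf sum_distrib_left)

text \<open>The unnormalised maximally entangled state \<open>\<Omega> = \<Sum>\<^sub>i\<^sub>j |ii\<rangle>\<langle>jj|\<close>; the Choi operator
  is \<open>(id \<otimes> \<Lambda>)(\<Omega>)\<close>, so complete positivity makes it positive.\<close>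

definition max_entangled :: "nat \<Rightarrow> complex mat" where
  "max_entangled d = mat (d * d) (d * d) (\<lambda>(r, c).
     (if r mod d = r div d then 1 else 0) * (if c mod d = c div d then 1 else 0))"

lemma psd_max_entangled: "psd (d * d) (max_entangled d)"
  unfolding psd_iff_qform
proof (intro conjI allI)
  fix v
  define g where "g r = (if r mod d = r div d then 1 else 0 :: complex)" for r
  define w where "w = (\<Sum>c<d * d. g c * v c)"
  have "qform (d * d) (max_entangled d) v = (\<Sum>r<d * d. \<Sum>c<d * d. (cnj (v r) * g r) * (g c * v c))"
    unfolding qform_def max_entangled_def g_def by (intro sum.cong refl) simp
  also have "\<dots> = (\<Sum>r<d * d. cnj (v r) * g r) * w"
    unfolding w_def by (simp add: sum_product)
  also have "(\<Sum>r<d * d. cnj (v r) * g r) = cnj w"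
    unfolding w_def g_def by (simp add: mult.commute if_distrib[where f=cnj] cong: if_cong)
  finally have "qform (d * d) (max_entangled d) v = of_real ((cmod w)\<^sup>2)"
    unfolding complex_norm_square by (simp add: mult.commute)
  then show "Im (qform (d * d) (max_entangled d) v) = 0" "Re (qform (d * d) (max_entangled d) v) \<ge> 0"
    by simp_all
qed (simp add: max_entangled_def)

lemma ampl_max_entangled: "ampl d1 d1 d2 \<Lambda> (max_entangled d1) = choi d1 d2 \<Lambda>"
proof (rule eq_matI)
  fix r c assume "r < dim_row (choi d1 d2 \<Lambda>)" "c < dim_col (choi d1 d2 \<Lambda>)"
  then have rc: "r < d1 * d2" "c < d1 * d2" by (auto simp: choi_def)
  then have blocks: "r div d2 < d1" "c div d2 < d1" by (simp_all add: less_mult_imp_div_less)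
  have "mat d1 d1 (\<lambda>(a, b). max_entangled d1 $$ ((r div d2) * d1 + a, (c div d2) * d1 + b))
      = unit_mat d1 (r div d2) (c div d2)"
    using blocks by (intro eq_matI) (auto simp: max_entangled_def unit_mat_def block_index_less)
  then show "ampl d1 d1 d2 \<Lambda> (max_entangled d1) $$ (r, c) = choi d1 d2 \<Lambda> $$ (r, c)"
    using rc by (simp add: ampl_def choi_def)
qed (simp_all add: ampl_def choi_def)

lemma psd_choi:
  assumes "channel d1 d2 \<Lambda>"
  shows "psd (d1 * d2) (choi d1 d2 \<Lambda>)"
proof -
  have "psd (d1 * d2) (ampl d1 d1 d2 \<Lambda> (max_entangled d1))"
    using assms psd_max_entangled[of d1] unfolding channel_def by blast
  then show ?thesis by (simp add: ampl_max_entangled)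
qed

definition map_of_choi :: "nat \<Rightarrow> nat \<Rightarrow> complex mat \<Rightarrow> complex mat \<Rightarrow> complex mat" where
  "map_of_choi d1 d2 X A = mat d2 d2 (\<lambda>(a, b).
     \<Sum>i<d1. \<Sum>j<d1. A $$ (i, j) * X $$ (i * d2 + a, j * d2 + b))"

lemma sum_delta_pair:
  fixes i0 j0 :: nat
  assumes "i0 < m" "j0 < n"
  shows "(\<Sum>i<m. \<Sum>j<n. if i = i0 \<and> j = j0 then x else 0) = x"
proof -
  have "(\<Sum>i<m. \<Sum>j<n. if i = i0 \<and> j = j0 then x else 0)
      = (\<Sum>i<m. if i = i0 then (\<Sum>j<n. if j = j0 then x else 0) else 0)"
    by (intro sum.cong refl) auto
  then show ?thesis using assms by simp
qed

lemma choi_map_of_choi: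
  assumes "X \<in> carrier_mat (d1 * d2) (d1 * d2)"
  shows "choi d1 d2 (map_of_choi d1 d2 X) = X"
proof (rule eq_matI)
  fix r c assume "r < dim_row X" "c < dim_col X"
  then have rc: "r < d1 * d2" "c < d1 * d2" using assms by auto
  then have "r div d2 < d1" "c div d2 < d1" by (simp_all add: less_mult_imp_div_less)
  then have "choi d1 d2 (map_of_choi d1 d2 X) $$ (r, c)
      = X $$ ((r div d2) * d2 + r mod d2, (c div d2) * d2 + c mod d2)"
    using rc mod_less_of_less_mult[OF rc(1)] mod_less_of_less_mult[OF rc(2)]
    by (simp add: choi_def map_of_choi_def unit_mat_def if_distrib[where f="\<lambda>t. t * _"] sum_delta_pair
        cong: if_cong)
  then show "choi d1 d2 (map_of_choi d1 d2 X) $$ (r, c) = X $$ (r, c)" by simp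
qed (use assms in \<open>simp_all add: choi_def\<close>)

lemma map_of_choi_carrier: "map_of_choi d1 d2 X A \<in> carrier_mat d2 d2"
  by (simp add: map_of_choi_def)

lemma map_of_choi_add:
  assumes "A \<in> carrier_mat d1 d1" "B \<in> carrier_mat d1 d1"
  shows "map_of_choi d1 d2 X (A + B) = map_of_choi d1 d2 X A + map_of_choi d1 d2 X B"
  using assms by (intro eq_matI) (simp_all add: map_of_choi_def sum.distrib distrib_right)

lemma map_of_choi_smult:
  assumes "A \<in> carrier_mat d1 d1"
  shows "map_of_choi d1 d2 X (c \<cdot>\<^sub>m A) = c \<cdot>\<^sub>m map_of_choi d1 d2 X A"
  using assms by (intro eq_matI) (simp_all add: map_of_choi_def sum_distrib_left mult.assoc)

lemma mtrace_map_of_choi: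
  assumes ptr: "ptrace d1 d2 X = 1\<^sub>m d1" and A: "A \<in> carrier_mat d1 d1"
  shows "mtrace (map_of_choi d1 d2 X A) = mtrace A"
proof -
  have ptr_entry: "(\<Sum>a<d2. X $$ (i * d2 + a, j * d2 + a)) = (if i = j then 1 else 0)"
    if "i < d1" "j < d1" for i j
    using arg_cong[OF ptr, of "\<lambda>M. M $$ (i, j)"] that by (simp add: ptrace_def)
  have "mtrace (map_of_choi d1 d2 X A) = (\<Sum>i<d1. \<Sum>j<d1. A $$ (i, j) * (\<Sum>a<d2. X $$ (i * d2 + a, j * d2 + a)))"
    unfolding mtrace_def map_of_choi_def
    by (simp add: sum_distrib_left sum.swap[of _ "{..<d2}"])
  also have "\<dots> = (\<Sum>i<d1. \<Sum>j<d1. if j = i then A $$ (i, j) else 0)"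
    by (intro sum.cong refl) (auto simp: ptr_entry)
  also have "\<dots> = mtrace A"
    using A by (simp add: mtrace_def)
  finally show ?thesis .
qed

lemma sum_lessThan_mult_split: "(\<Sum>r<k * d. f r) = (\<Sum>p<k. \<Sum>a<d. f (p * d + (a :: nat)))"
proof (induction k)
  case 0
  then show ?case by simp
next
  case (Suc k)
  have append: "(\<Sum>r<m + e. f r) = (\<Sum>r<m. f r) + (\<Sum>a<e. f (m + a))" for m e
    by (induction e) (simp_all add: add.assoc)
  have "(\<Sum>r<Suc k * d. f r) = (\<Sum>r<k * d + d. f r)" by (simp add: add.commute)
  also have "\<dots> = (\<Sum>r<k * d. f r) + (\<Sum>a<d. f (k * d + a))" by (rule append)
  finally show ?case using Suc by simp
qed

lemma sum_if_div_eq: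
  fixes F :: "nat \<Rightarrow> 'a::comm_monoid_add"
  assumes "P < k"
  shows "(\<Sum>x<k * d. if x div d = P then F x else 0) = (\<Sum>i<d. F (P * d + i))"
proof -
  have "(\<Sum>x<k * d. if x div d = P then F x else 0)
      = (\<Sum>p<k. if p = P then (\<Sum>a<d. F (p * d + a)) else 0)"
    unfolding sum_lessThan_mult_split
    by (intro sum.cong refl) (auto intro!: sum.cong)
  also have "\<dots> = (\<Sum>i<d. F (P * d + i))" using assms by simp
  finally show ?thesis .
qed

text \<open>If \<open>X = \<Sum>\<^sub>t w\<^sub>t w\<^sub>t\<^sup>*\<close>, then \<open>map_of_choi d1 d2 X\<close> has the Kraus operators
  \<open>K\<^sub>t = \<Sum>\<^sub>i\<^sub>a w\<^sub>t(i d2 + a) |a\<rangle>\<langle>i|\<close>; \<open>ampl_kraus d1 d2 w t x r\<close> is the \<open>(x, r)\<close> entry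
  of \<open>(1 \<otimes> K\<^sub>t)\<^sup>*\<close>.\<close>

definition ampl_kraus :: "nat \<Rightarrow> nat \<Rightarrow> (nat \<Rightarrow> nat \<Rightarrow> complex) \<Rightarrow> nat \<Rightarrow> nat \<Rightarrow> nat \<Rightarrow> complex" where
  "ampl_kraus d1 d2 w t x r =
     (if x div d1 = r div d2 then cnj (w t ((x mod d1) * d2 + r mod d2)) else 0)"

lemma ampl_kraus_sum:
  assumes "P < k" "Q < k" "a < d2" "b < d2"
  shows "(\<Sum>x<k * d1. \<Sum>y<k * d1. cnj (ampl_kraus d1 d2 w t x (P * d2 + a)) * Y $$ (x, y)
            * ampl_kraus d1 d2 w t y (Q * d2 + b))
       = (\<Sum>i<d1. \<Sum>j<d1. w t (i * d2 + a) * Y $$ (P * d1 + i, Q * d1 + j) * cnj (w t (j * d2 + b)))"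
proof -
  have [simp]: "(P * d2 + a) div d2 = P" "(P * d2 + a) mod d2 = a" "(Q * d2 + b) div d2 = Q" "(Q * d2 + b) mod d2 = b"
    using assms by simp_all
  define F where "F x y = w t ((x mod d1) * d2 + a) * Y $$ (x, y) * cnj (w t ((y mod d1) * d2 + b))" for x y
  have "(\<Sum>x<k * d1. \<Sum>y<k * d1. cnj (ampl_kraus d1 d2 w t x (P * d2 + a)) * Y $$ (x, y)
            * ampl_kraus d1 d2 w t y (Q * d2 + b))
      = (\<Sum>x<k * d1. if x div d1 = P then (\<Sum>y<k * d1. if y div d1 = Q then F x y else 0) else 0)"
    using assms unfolding ampl_kraus_def F_def by (intro sum.cong refl) (auto intro!: sum.cong)
  also have "\<dots> = (\<Sum>x<k * d1. if x div d1 = P then (\<Sum>j<d1. F x (Q * d1 + j)) else 0)"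
    by (intro sum.cong refl) (simp add: sum_if_div_eq[OF assms(2)])
  also have "\<dots> = (\<Sum>i<d1. \<Sum>j<d1. F (P * d1 + i) (Q * d1 + j))"
    by (rule sum_if_div_eq[OF assms(1)])
  finally show ?thesis by (simp add: F_def)
qed

lemma ampl_map_of_choi_kraus:
  assumes X: "\<And>p q. p < d1 * d2 \<Longrightarrow> q < d1 * d2 \<Longrightarrow> X $$ (p, q) = (\<Sum>t<T. w t p * cnj (w t q))"
    and rc: "r < k * d2" "c < k * d2"
  shows "ampl k d1 d2 (map_of_choi d1 d2 X) Y $$ (r, c) =
    (\<Sum>t<T. \<Sum>x<k * d1. \<Sum>y<k * d1. cnj (ampl_kraus d1 d2 w t x r) * Y $$ (x, y) * ampl_kraus d1 d2 w t y c)"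
proof -
  define P Q a b where "P = r div d2" "Q = c div d2" "a = r mod d2" "b = c mod d2"
  have idx: "P < k" "Q < k" "a < d2" "b < d2"
    using rc mod_less_of_less_mult[OF rc(1)] mod_less_of_less_mult[OF rc(2)]
    unfolding P_Q_a_b_def by (simp_all add: less_mult_imp_div_less)
  have rc_eq: "r = P * d2 + a" "c = Q * d2 + b" unfolding P_Q_a_b_def by simp_all
  have "ampl k d1 d2 (map_of_choi d1 d2 X) Y $$ (r, c)
      = (\<Sum>i<d1. \<Sum>j<d1. Y $$ (P * d1 + i, Q * d1 + j) * X $$ (i * d2 + a, j * d2 + b))"
    using rc idx unfolding ampl_def map_of_choi_def P_Q_a_b_def by simp
  also have "\<dots> = (\<Sum>i<d1. \<Sum>j<d1. \<Sum>t<T. w t (i * d2 + a) * Y $$ (P * d1 + i, Q * d1 + j) * cnj (w t (j * d2 + b)))"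
  proof (intro sum.cong refl)
    fix i j assume "i \<in> {..<d1}" "j \<in> {..<d1}"
    then have "X $$ (i * d2 + a, j * d2 + b) = (\<Sum>t<T. w t (i * d2 + a) * cnj (w t (j * d2 + b)))"
      using idx by (intro X block_index_less) auto
    then show "Y $$ (P * d1 + i, Q * d1 + j) * X $$ (i * d2 + a, j * d2 + b)
        = (\<Sum>t<T. w t (i * d2 + a) * Y $$ (P * d1 + i, Q * d1 + j) * cnj (w t (j * d2 + b)))"
      by (simp add: sum_distrib_left algebra_simps)
  qed
  also have "\<dots> = (\<Sum>t<T. \<Sum>i<d1. \<Sum>j<d1. w t (i * d2 + a) * Y $$ (P * d1 + i, Q * d1 + j) * cnj (w t (j * d2 + b)))"
    by (subst sum.swap, rule sum.cong[OF refl], rule sum.swap)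
  also have "\<dots> = (\<Sum>t<T. \<Sum>x<k * d1. \<Sum>y<k * d1.
      cnj (ampl_kraus d1 d2 w t x r) * Y $$ (x, y) * ampl_kraus d1 d2 w t y c)"
    unfolding rc_eq by (simp add: ampl_kraus_sum[OF idx])
  finally show ?thesis .
qed

lemma psd_ampl_map_of_choi:
  assumes X: "psd (d1 * d2) X" and Y: "psd (k * d1) Y"
  shows "psd (k * d2) (ampl k d1 d2 (map_of_choi d1 d2 X) Y)"
proof -
  obtain w where w: "\<And>p q. p < d1 * d2 \<Longrightarrow> q < d1 * d2 \<Longrightarrow> X $$ (p, q) = (\<Sum>t<d1 * d2. w t p * cnj (w t q))"
    using psd_gram_factor[OF X] by blast
  show ?thesis
    by (rule psd_congruence[OF Y _ ampl_map_of_choi_kraus[OF w]]) (simp_all add: ampl_def)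
qed

lemma channel_map_of_choi:
  assumes "psd (d1 * d2) X" "ptrace d1 d2 X = 1\<^sub>m d1"
  shows "channel d1 d2 (map_of_choi d1 d2 X)"
  unfolding channel_def
  using assms by (simp add: map_of_choi_carrier map_of_choi_add map_of_choi_smult mtrace_map_of_choi
      psd_ampl_map_of_choi)

lemma smult_mixture_diff:
  assumes "A \<in> carrier_mat N N" "B \<in> carrier_mat N N"
  shows "complex_of_real \<alpha> \<cdot>\<^sub>m (complex_of_real \<beta> \<cdot>\<^sub>m (A + complex_of_real \<sigma> \<cdot>\<^sub>m B))
      - complex_of_real \<gamma> \<cdot>\<^sub>m A
    = complex_of_real (\<alpha> * \<beta> - \<gamma>) \<cdot>\<^sub>m A + complex_of_real (\<alpha> * \<beta> * \<sigma>) \<cdot>\<^sub>m B"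
  using assms by (intro eq_matI) (simp_all add: algebra_simps)

lemma smult_unmix:
  assumes "A \<in> carrier_mat N N" "B \<in> carrier_mat N N"
  shows "complex_of_real \<beta> \<cdot>\<^sub>m (A + complex_of_real \<sigma> \<cdot>\<^sub>m
      (complex_of_real \<alpha> \<cdot>\<^sub>m B - complex_of_real \<gamma> \<cdot>\<^sub>m A))
    = complex_of_real (\<beta> * \<sigma> * \<alpha>) \<cdot>\<^sub>m B + complex_of_real (\<beta> - \<beta> * \<sigma> * \<gamma>) \<cdot>\<^sub>m A"
  using assms by (intro eq_matI) (simp_all add: algebra_simps)

lemma psd_choi_shift_if_mixture:
  assumes \<Lambda>: "channel d1 d2 \<Lambda>" and \<Theta>: "channel d1 d2 \<Theta>" and s': "0 < s'" "s' \<le> s"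
    and mix: "choi d1 d2 \<Xi> = complex_of_real (1 / (1 + s')) \<cdot>\<^sub>m
      (choi d1 d2 \<Lambda> + complex_of_real s' \<cdot>\<^sub>m choi d1 d2 \<Theta>)"
  shows "psd (d1 * d2)
    (complex_of_real ((1 + s) / s) \<cdot>\<^sub>m choi d1 d2 \<Xi> - complex_of_real (1 / s) \<cdot>\<^sub>m choi d1 d2 \<Lambda>)"
proof -
  have "s \<noteq> 0" "1 + s' \<noteq> 0" using s' by auto
  then have coeff: "(1 + s) / s * (1 / (1 + s')) - 1 / s = (s - s') / (s * (1 + s'))"
    by (simp add: divide_simps)
  have "0 \<le> (s - s') / (s * (1 + s'))" "0 \<le> (1 + s) / s * (1 / (1 + s')) * s'"
    using s' by simp_all
  then show ?thesis
    unfolding mix smult_mixture_diff[OF choi_carrier choi_carrier] coeff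
    by (intro psd_nonneg_lincomb psd_choi \<Lambda> \<Theta>)
qed

lemma mixture_if_psd_choi_shift:
  fixes d1 d2 :: nat and \<Lambda> \<Xi> :: "complex mat \<Rightarrow> complex mat" and s :: real
  defines "X \<equiv> complex_of_real ((1 + s) / s) \<cdot>\<^sub>m choi d1 d2 \<Xi> - complex_of_real (1 / s) \<cdot>\<^sub>m choi d1 d2 \<Lambda>"
  assumes \<Lambda>: "channel d1 d2 \<Lambda>" and \<Xi>: "channel d1 d2 \<Xi>" and "s > 0" and X: "psd (d1 * d2) X"
  shows "channel d1 d2 (map_of_choi d1 d2 X)"
    and "choi d1 d2 \<Xi> = complex_of_real (1 / (1 + s)) \<cdot>\<^sub>m
      (choi d1 d2 \<Lambda> + complex_of_real s \<cdot>\<^sub>m choi d1 d2 (map_of_choi d1 d2 X))"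
proof -
  have "s \<noteq> 0" "1 + s \<noteq> 0" using \<open>s > 0\<close> by auto
  then have "complex_of_real ((1 + s) / s) - complex_of_real (1 / s) = 1"
    by (simp add: divide_simps flip: of_real_diff)
  then have "ptrace d1 d2 X = 1\<^sub>m d1"
    unfolding X_def ptrace_smult_diff[OF choi_carrier choi_carrier] ptrace_choi[OF \<Lambda>] ptrace_choi[OF \<Xi>]
    by (intro eq_matI) simp_all
  then show "channel d1 d2 (map_of_choi d1 d2 X)"
    by (rule channel_map_of_choi[OF X])
  have "1 / (1 + s) * s * ((1 + s) / s) = 1" "1 / (1 + s) - 1 / (1 + s) * s * (1 / s) = 0"
    using \<open>s \<noteq> 0\<close> \<open>1 + s \<noteq> 0\<close> by simp_all
  then have "complex_of_real (1 / (1 + s)) \<cdot>\<^sub>m (choi d1 d2 \<Lambda> + complex_of_real s \<cdot>\<^sub>m X) = choi d1 d2 \<Xi>"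
    unfolding X_def smult_unmix[OF choi_carrier choi_carrier] by (intro eq_matI) (simp_all add: choi_def)
  moreover have "choi d1 d2 (map_of_choi d1 d2 X) = X"
    using X by (simp add: choi_map_of_choi psd_def)
  ultimately show "choi d1 d2 \<Xi> = complex_of_real (1 / (1 + s)) \<cdot>\<^sub>m
      (choi d1 d2 \<Lambda> + complex_of_real s \<cdot>\<^sub>m choi d1 d2 (map_of_choi d1 d2 X))"
    by simp
qed

theorem lemma14:
  fixes d1 d2 :: nat and \<Lambda> \<Xi> :: "complex mat \<Rightarrow> complex mat" and s :: real
  assumes "d1 > 0" and "d2 > 0"
    and "channel d1 d2 \<Lambda>" and "channel d1 d2 \<Xi>" and "s > 0"
  shows "(\<exists>s' :: real. \<exists>\<Theta>. 0 < s' \<and> s' \<le> s \<and> channel d1 d2 \<Theta> \<and>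
            choi d1 d2 \<Xi> = complex_of_real (1 / (1 + s')) \<cdot>\<^sub>m
               (choi d1 d2 \<Lambda> + complex_of_real s' \<cdot>\<^sub>m choi d1 d2 \<Theta>))
     \<longleftrightarrow> (\<forall>m \<in> {1..d1 * d2}.
            S m (complex_of_real ((1 + s) / s) \<cdot>\<^sub>m choi d1 d2 \<Xi>
                 - complex_of_real (1 / s) \<cdot>\<^sub>m choi d1 d2 \<Lambda>) \<ge> 0)"
proof -
  define X where "X = complex_of_real ((1 + s) / s) \<cdot>\<^sub>m choi d1 d2 \<Xi> - complex_of_real (1 / s) \<cdot>\<^sub>m choi d1 d2 \<Lambda>"
  have "hermitian (d1 * d2) X"
    unfolding X_def by (intro hermitian_smult_diff psd_imp_hermitian psd_choi assms(3,4))
  then have S_iff: "(\<forall>m\<in>{1..d1 * d2}. S m X \<ge> 0) \<longleftrightarrow> psd (d1 * d2) X"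
    by (simp add: hermitian_psd_iff_S_nonneg)
  show ?thesis
    unfolding X_def[symmetric] S_iff
  proof
    assume "\<exists>s' \<Theta>. 0 < s' \<and> s' \<le> s \<and> channel d1 d2 \<Theta> \<and>
      choi d1 d2 \<Xi> = complex_of_real (1 / (1 + s')) \<cdot>\<^sub>m (choi d1 d2 \<Lambda> + complex_of_real s' \<cdot>\<^sub>m choi d1 d2 \<Theta>)"
    then show "psd (d1 * d2) X"
      unfolding X_def using psd_choi_shift_if_mixture[OF assms(3)] by blast
  next
    assume "psd (d1 * d2) X"
    then show "\<exists>s' \<Theta>. 0 < s' \<and> s' \<le> s \<and> channel d1 d2 \<Theta> \<and>
      choi d1 d2 \<Xi> = complex_of_real (1 / (1 + s')) \<cdot>\<^sub>m (choi d1 d2 \<Lambda> + complex_of_real s' \<cdot>\<^sub>m choi d1 d2 \<Theta>)"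
      using mixture_if_psd_choi_shift[OF assms(3,4,5)] \<open>s > 0\<close> unfolding X_def by blast
  qed
qed

end
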